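(* Let $s\ge0$ be a constant, let $K_s=\frac{1+\sqrt{2}}{3}-\frac{\sqrt{4+2\sqrt{2}}}{4}+\frac{2-\sqrt{2}}{6}s$ and $\epsilon_0=\frac{2-\sqrt2}{6}$. Let $(M,g)$ be a complete oriented four-dimensional Einstein manifold with nonnegative sectional curvature and $\mathrm{Ric}=g$, such that $K_{ik}+sK_{ij}\ge K_s$ for every orthonormal basis $\{e_i\}$ of every tangent space and all distinct $i,j,k$ with $K_{ik}\ge K_{ij}$. Fix $o\in M$ and a Berger basis at $o$ (see context), with $a_1,a_2,a_3,c_1,c_2,c_3,I$ defined from it as in the context, and suppose the minimal sectional curvature at $o$ satisfies $K_{12}\le \epsilon_0-\epsilon$ for a constant $\epsilon>0$. Then: (1) if $a_2\ge0$ and $c_2\ge0$, then $I>\frac83\epsilon$; (2) if $a_2<0$ or $c_2<0$, then $I>\epsilon$.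
   Context: Curvature conventions: $R_{ijkl}=R(e_i,e_j,e_k,e_l)$ with $K_{ij}=R_{ijij}$ the sectional curvature of the plane spanned by $e_i,e_j$. A Berger basis at $o$ is a positively oriented orthonormal basis $\{e_i\}$ of $T_oM$ such that: (1) $K_{12}=\min\{K(\pi):\pi\subset T_oM\}$; (2) $K_{14}=\max\{K(\pi):\pi\subset T_oM\}$; (3) $R_{ikjk}=0$ for all $i\ne j$; (4) $|R_{1342}-R_{1234}|\le K_{13}-K_{12}$, $|R_{1423}-R_{1342}|\le K_{14}-K_{13}$, $|R_{1423}-R_{1234}|\le K_{14}-K_{12}$ (such a basis exists at every point of an oriented Einstein four-manifold, by Berger). Define $a_1=2(K_{12}+R_{1234})$, $a_2=2(K_{13}+R_{1342})$, $a_3=2(K_{14}+R_{1423})$, $c_1=2(K_{12}-R_{1234})$, $c_2=2(K_{13}-R_{1342})$, $c_3=2(K_{14}-R_{1423})$; these are the eigenvalues of the curvature operator restricted to self-dual and anti-self-dual 2-forms respectively, with $a_1\le a_2\le a_3$ and $c_1\le c_2\le c_3$. Define $$I=(c_2-c_1)c_3+(c_3-c_1)c_2+(a_2-a_1)a_3+(a_3-a_1)a_2 .$$ *)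

theory Defs
  imports Complex_Main
begin

text \<open>Pointwise (algebraic) data at the point o of an oriented Riemannian 4-manifold.
  We work in the coordinates given by the Berger basis e_1,...,e_4 at o, so the tangent
  space T_oM is identified isometrically and orientation-preservingly with R^4,
  vectors being functions on the index set {1..4}. The curvature tensor at o is
  given by its components R i j k l = R(e_i,e_j,e_k,e_l).\<close>

definition idx :: "nat set" where "idx = {1..4}"

definition ip :: "(nat \<Rightarrow> real) \<Rightarrow> (nat \<Rightarrow> real) \<Rightarrow> real" where
  "ip u v = (\<Sum>i\<in>idx. u i * v i)"

definition Rf :: "(nat \<Rightarrow> nat \<Rightarrow> nat \<Rightarrow> nat \<Rightarrow> real) \<Rightarrow>
    (nat \<Rightarrow> real) \<Rightarrow> (nat \<Rightarrow> real) \<Rightarrow> (nat \<Rightarrow> real) \<Rightarrow> (nat \<Rightarrow> real) \<Rightarrow> real" where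
  "Rf R u v w z = (\<Sum>i\<in>idx. \<Sum>j\<in>idx. \<Sum>k\<in>idx. \<Sum>l\<in>idx. R i j k l * u i * v j * w k * z l)"

definition alg_curv_tensor :: "(nat \<Rightarrow> nat \<Rightarrow> nat \<Rightarrow> nat \<Rightarrow> real) \<Rightarrow> bool" where
  "alg_curv_tensor R \<longleftrightarrow> (\<forall>i\<in>idx. \<forall>j\<in>idx. \<forall>k\<in>idx. \<forall>l\<in>idx.
      R i j k l = - R j i k l \<and> R i j k l = - R i j l k \<and> R i j k l = R k l i j \<and>
      R i j k l + R j k i l + R k i j l = 0)"

definition einstein_ric_one :: "(nat \<Rightarrow> nat \<Rightarrow> nat \<Rightarrow> nat \<Rightarrow> real) \<Rightarrow> bool" where
  "einstein_ric_one R \<longleftrightarrow> (\<forall>i\<in>idx. \<forall>j\<in>idx.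
      (\<Sum>k\<in>idx. R i k j k) = (if i = j then 1 else 0))"

definition orthonormal_pair :: "(nat \<Rightarrow> real) \<Rightarrow> (nat \<Rightarrow> real) \<Rightarrow> bool" where
  "orthonormal_pair u v \<longleftrightarrow> ip u u = 1 \<and> ip v v = 1 \<and> ip u v = 0"

definition sec :: "(nat \<Rightarrow> nat \<Rightarrow> nat \<Rightarrow> nat \<Rightarrow> real) \<Rightarrow> (nat \<Rightarrow> real) \<Rightarrow> (nat \<Rightarrow> real) \<Rightarrow> real" where
  "sec R u v = Rf R u v u v"

definition orthonormal_basis :: "(nat \<Rightarrow> nat \<Rightarrow> real) \<Rightarrow> bool" where
  "orthonormal_basis f \<longleftrightarrow> (\<forall>i\<in>idx. \<forall>j\<in>idx. ip (f i) (f j) = (if i = j then 1 else 0))"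

definition nonneg_sec :: "(nat \<Rightarrow> nat \<Rightarrow> nat \<Rightarrow> nat \<Rightarrow> real) \<Rightarrow> bool" where
  "nonneg_sec R \<longleftrightarrow> (\<forall>u v. orthonormal_pair u v \<longrightarrow> sec R u v \<ge> 0)"

definition K_s :: "real \<Rightarrow> real" where
  "K_s s = (1 + sqrt 2) / 3 - sqrt (4 + 2 * sqrt 2) / 4 + (2 - sqrt 2) / 6 * s"

definition eps0 :: real where
  "eps0 = (2 - sqrt 2) / 6"

definition pinched :: "(nat \<Rightarrow> nat \<Rightarrow> nat \<Rightarrow> nat \<Rightarrow> real) \<Rightarrow> real \<Rightarrow> bool" where
  "pinched R s \<longleftrightarrow> (\<forall>f. orthonormal_basis f \<longrightarrow>
     (\<forall>i\<in>idx. \<forall>j\<in>idx. \<forall>k\<in>idx. i \<noteq> j \<and> j \<noteq> k \<and> i \<noteq> k \<and>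
        sec R (f i) (f k) \<ge> sec R (f i) (f j) \<longrightarrow>
        sec R (f i) (f k) + s * sec R (f i) (f j) \<ge> K_s s))"

definition Kc :: "(nat \<Rightarrow> nat \<Rightarrow> nat \<Rightarrow> nat \<Rightarrow> real) \<Rightarrow> nat \<Rightarrow> nat \<Rightarrow> real" where
  "Kc R i j = R i j i j"

definition berger_basis :: "(nat \<Rightarrow> nat \<Rightarrow> nat \<Rightarrow> nat \<Rightarrow> real) \<Rightarrow> bool" where
  "berger_basis R \<longleftrightarrow>
     (\<forall>u v. orthonormal_pair u v \<longrightarrow> Kc R 1 2 \<le> sec R u v) \<and>
     (\<forall>u v. orthonormal_pair u v \<longrightarrow> sec R u v \<le> Kc R 1 4) \<and>
     (\<forall>i\<in>idx. \<forall>j\<in>idx. \<forall>k\<in>idx. i \<noteq> j \<longrightarrow> R i k j k = 0) \<and>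
     \<bar>R 1 3 4 2 - R 1 2 3 4\<bar> \<le> Kc R 1 3 - Kc R 1 2 \<and>
     \<bar>R 1 4 2 3 - R 1 3 4 2\<bar> \<le> Kc R 1 4 - Kc R 1 3 \<and>
     \<bar>R 1 4 2 3 - R 1 2 3 4\<bar> \<le> Kc R 1 4 - Kc R 1 2"

definition a1 where "a1 R = 2 * (Kc R 1 2 + R 1 2 3 4)"
definition a2 where "a2 R = 2 * (Kc R 1 3 + R 1 3 4 2)"
definition a3 where "a3 R = 2 * (Kc R 1 4 + R 1 4 2 3)"
definition c1 where "c1 R = 2 * (Kc R 1 2 - R 1 2 3 4)"
definition c2 where "c2 R = 2 * (Kc R 1 3 - R 1 3 4 2)"
definition c3 where "c3 R = 2 * (Kc R 1 4 - R 1 4 2 3)"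

definition Iq :: "(nat \<Rightarrow> nat \<Rightarrow> nat \<Rightarrow> nat \<Rightarrow> real) \<Rightarrow> real" where
  "Iq R = (c2 R - c1 R) * c3 R + (c3 R - c1 R) * c2 R
        + (a2 R - a1 R) * a3 R + (a3 R - a1 R) * a2 R"

end

theory Submission
  imports Defs
begin

text \<open>Both a and c are sorted triples with sum 2 (from Ric = g and the first Bianchi identity),
  and I is the sum of their spreads. Since a1 + c1 = 4 K12 and a2 + c2 = 4 K13, the pinching
  condition gives a2 + c2 \<ge> 4 K_s(0) once K12 \<le> eps0. If both middle eigenvalues are
  nonnegative, each spread is at least 4/3 times the gap x2 - x1. If one of them is negative, a
  sum-of-squares identity bounds I below by a quadratic I_lower in T = a1 + c1; the constant K_s is
  exactly the one making I_lower vanish at T = 4 eps0, and I_lower is convex in T with slope below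
  -1/4 there.\<close>

definition spread :: "real \<Rightarrow> real \<Rightarrow> real \<Rightarrow> real" where
  "spread x1 x2 x3 = (x2 - x1) * x3 + (x3 - x1) * x2"

definition I_lower :: "real \<Rightarrow> real \<Rightarrow> real" where
  "I_lower T K = 2 * K\<^sup>2 - T * (2 - T) - 2/3 * (2 - T - 2 * K)\<^sup>2"

lemma spread_ge_gap:
  fixes x1 x2 x3 :: real
  assumes "x1 + x2 + x3 = 2" "x1 \<le> x2" "x2 \<le> x3" "x2 \<ge> 0"
  shows "spread x1 x2 x3 \<ge> 4/3 * (x2 - x1)"
proof -
  have x3: "x3 = 2 - x1 - x2" using assms(1) by linarith
  have "spread x1 x2 x3 = (2 - x1) * (x2 - x1) + x2 * (x3 - x2)"
    unfolding spread_def x3 by (simp add: algebra_simps)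
  moreover have "(2 - x1) * (x2 - x1) \<ge> 4/3 * (x2 - x1)"
    using assms by (intro mult_right_mono) auto
  moreover have "x2 * (x3 - x2) \<ge> 0" using assms by simp
  ultimately show ?thesis by linarith
qed

lemma spread_add_ge_I_lower_of_nonpos:
  fixes a1 a2 a3 c1 c2 c3 K :: real
  assumes sum_a: "a1 + a2 + a3 = 2" and sum_c: "c1 + c2 + c3 = 2"
    and "a1 \<le> a2" "a2 \<le> a3" "c1 \<le> c2"
    and "c2 \<le> 0" "a2 + c2 \<ge> K" "0 \<le> a1 + c1" "0 \<le> K" "K \<le> 1"
  shows "spread c1 c2 c3 + spread a1 a2 a3 \<ge> I_lower (a1 + c1) K"
proof -
  define g1 where "g1 = c2 - c1"
  define g2 where "g2 = 2 - a1 - 2 * K + 2 * c2"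
  have a3: "a3 = 2 - a1 - a2" using sum_a by linarith
  have c3: "c3 = 2 - c1 - c2" using sum_c by linarith
  have sos: "spread c1 c2 c3 + spread a1 a2 a3 = I_lower (a1 + c1) K
      + 2 * ((a2 - K + c2) * (a3 - K + c2))
      + ((8 + 2 * (a1 + c1) - 8 * K) * g1 + 4 * g1\<^sup>2 + 2 * (g2 * (2 + K - a1 - 4 * c2))) / 3"
    unfolding spread_def I_lower_def a3 c3 g1_def g2_def by (simp add: field_simps power2_eq_square)
  have "a1 \<le> 2/3" using assms by linarith
  then have "g2 * (2 + K - a1 - 4 * c2) \<ge> 0"
    unfolding g2_def using assms by simp
  moreover have "(a2 - K + c2) * (a3 - K + c2) \<ge> 0" using assms by simp
  moreover have "(8 + 2 * (a1 + c1) - 8 * K) * g1 \<ge> 0" unfolding g1_def using assms by simp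
  ultimately show ?thesis unfolding sos by (simp add: add_nonneg_nonneg)
qed

lemma spread_add_ge_I_lower:
  fixes a1 a2 a3 c1 c2 c3 K :: real
  assumes "a1 + a2 + a3 = 2" "c1 + c2 + c3 = 2" "a1 \<le> a2" "a2 \<le> a3" "c1 \<le> c2" "c2 \<le> c3"
    and "a2 < 0 \<or> c2 < 0" "a2 + c2 \<ge> K" "0 \<le> a1 + c1" "0 \<le> K" "K \<le> 1"
  shows "spread c1 c2 c3 + spread a1 a2 a3 \<ge> I_lower (a1 + c1) K"
  using assms(7)
proof
  assume "a2 < 0"
  then show ?thesis
    using spread_add_ge_I_lower_of_nonpos[of c1 c2 c3 a1 a2 a3 K] assms by (simp add: add.commute)
next
  assume "c2 < 0"
  then show ?thesis using spread_add_ge_I_lower_of_nonpos[of a1 a2 a3 c1 c2 c3 K] assms by simp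
qed

lemma I_lower_expand:
  "I_lower T K = I_lower T0 K + (2/3 + 2 * T0 / 3 - 8 * K / 3) * (T - T0) + (T - T0)\<^sup>2 / 3"
  unfolding I_lower_def by (simp add: field_simps power2_eq_square)

lemma K_s_shift: "K_s s = K_s 0 + eps0 * s"
  unfolding K_s_def eps0_def by (simp add: field_simps)

lemma sqrt_2_bounds: "141/100 < sqrt 2" "sqrt 2 < 142/100"
  by (rule real_less_rsqrt real_less_lsqrt; simp add: power2_eq_square)+

lemma K_s_0_bounds: "59/400 < K_s 0" "K_s 0 < 1/4"
proof -
  note r = sqrt_2_bounds
  have "26/10 < sqrt (4 + 2 * sqrt 2)" "sqrt (4 + 2 * sqrt 2) < 262/100"
    by (rule real_less_rsqrt real_less_lsqrt; use r in \<open>simp add: power2_eq_square\<close>)+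
  with r show "59/400 < K_s 0" "K_s 0 < 1/4" unfolding K_s_def by (simp_all add: field_simps)
qed

lemma eps0_lt_K_s_0: "eps0 < K_s 0"
  using sqrt_2_bounds K_s_0_bounds unfolding eps0_def by (simp add: field_simps)

lemma I_lower_at_eps0: "I_lower (4 * eps0) (4 * K_s 0) = 0"
proof -
  have "(sqrt (4 + 2 * sqrt 2))\<^sup>2 = 4 + 2 * sqrt 2" by simp
  then show ?thesis
    unfolding I_lower_def K_s_def eps0_def by (simp add: field_simps power2_eq_square)
qed

lemma I_lower_gt:
  fixes T \<epsilon> :: real
  assumes "\<epsilon> > 0" "T \<le> 4 * eps0 - 4 * \<epsilon>"
  shows "I_lower T (4 * K_s 0) > \<epsilon>"
proof -
  define X where "X = T - 4 * eps0"
  define D where "D = 2/3 + 2 * (4 * eps0) / 3 - 8 * (4 * K_s 0) / 3"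
  have D: "D < -1/4" using sqrt_2_bounds K_s_0_bounds unfolding D_def eps0_def by (simp add: field_simps)
  have X: "X \<le> -4 * \<epsilon>" using assms(2) unfolding X_def by simp
  have "I_lower T (4 * K_s 0) \<ge> D * X"
    using I_lower_expand[of T "4 * K_s 0" "4 * eps0"] I_lower_at_eps0
    unfolding D_def X_def by simp
  moreover have "D * X > -1/4 * X"
    using D X assms(1) by (intro mult_strict_right_mono_neg) auto
  ultimately show ?thesis using X by linarith
qed

definition coord :: "nat \<Rightarrow> nat \<Rightarrow> real" where
  "coord i = (\<lambda>j. if j = i then 1 else 0)"

lemma idx_eq: "idx = {1, 2, 3, 4}"
  unfolding idx_def by auto

lemma orthonormal_basis_coord: "orthonormal_basis coord"
  unfolding orthonormal_basis_def ip_def idx_eq coord_def by auto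

lemma orthonormal_pair_coord: "i \<in> idx \<Longrightarrow> j \<in> idx \<Longrightarrow> i \<noteq> j \<Longrightarrow> orthonormal_pair (coord i) (coord j)"
  using orthonormal_basis_coord unfolding orthonormal_basis_def orthonormal_pair_def by auto

lemma sum_mult_coord: "i \<in> idx \<Longrightarrow> (\<Sum>l\<in>idx. f l * coord i l) = f i"
  unfolding coord_def by (simp add: if_distrib[of "\<lambda>x. _ * x"] idx_def cong: if_cong)

lemma sec_coord: "i \<in> idx \<Longrightarrow> j \<in> idx \<Longrightarrow> sec R (coord i) (coord j) = Kc R i j"
  unfolding sec_def Rf_def Kc_def by (simp add: sum_mult_coord)

lemma Kc_nonneg: "nonneg_sec R \<Longrightarrow> i \<in> idx \<Longrightarrow> j \<in> idx \<Longrightarrow> i \<noteq> j \<Longrightarrow> 0 \<le> Kc R i j"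
  using orthonormal_pair_coord sec_coord unfolding nonneg_sec_def by metis

lemma pinched_coord:
  assumes "pinched R s" "i \<in> idx" "j \<in> idx" "k \<in> idx" "i \<noteq> j" "j \<noteq> k" "i \<noteq> k"
    and "Kc R i j \<le> Kc R i k"
  shows "K_s s \<le> Kc R i k + s * Kc R i j"
proof -
  have "sec R (coord i) (coord j) \<le> sec R (coord i) (coord k) \<longrightarrow>
      K_s s \<le> sec R (coord i) (coord k) + s * sec R (coord i) (coord j)"
    using assms(1-7) orthonormal_basis_coord unfolding pinched_def by blast
  then show ?thesis using assms(2-4,8) by (simp add: sec_coord)
qed

lemma alg_curv_tensorD:
  assumes "alg_curv_tensor R" "i \<in> idx" "j \<in> idx" "k \<in> idx" "l \<in> idx"
  shows "R i j k l = - R j i k l" "R i j k l = - R i j l k" "R i j k l = R k l i j"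
    "R i j k l + R j k i l + R k i j l = 0"
  using assms unfolding alg_curv_tensor_def by blast+

lemma bianchi_1234:
  assumes "alg_curv_tensor R"
  shows "R 1 2 3 4 + R 1 3 4 2 + R 1 4 2 3 = 0"
proof -
  have idx: "1 \<in> idx" "2 \<in> idx" "3 \<in> idx" "4 \<in> idx" by (simp_all add: idx_eq)
  note D = alg_curv_tensorD[OF assms]
  have "R 1 2 3 4 + R 2 3 1 4 + R 3 1 2 4 = 0" using D(4)[of 1 2 3 4] idx by blast
  moreover have "R 2 3 1 4 = R 1 4 2 3" using D(3)[of 2 3 1 4] idx by blast
  moreover have "R 3 1 2 4 = - R 1 3 2 4" using D(1)[of 3 1 2 4] idx by blast
  moreover have "R 1 3 4 2 = - R 1 3 2 4" using D(2)[of 1 3 2 4] idx by simp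
  ultimately show ?thesis by linarith
qed

lemma einstein_Kc_sum:
  assumes "alg_curv_tensor R" "einstein_ric_one R"
  shows "Kc R 1 2 + Kc R 1 3 + Kc R 1 4 = 1"
proof -
  have "R 1 1 1 1 = - R 1 1 1 1" using alg_curv_tensorD(1)[OF assms(1), of 1 1 1 1] by (simp add: idx_eq)
  moreover have "(\<Sum>k\<in>idx. R 1 k 1 k) = 1"
    using assms(2) unfolding einstein_ric_one_def by (simp add: idx_eq)
  ultimately show ?thesis unfolding idx_eq Kc_def by simp
qed

lemma a_sum: "alg_curv_tensor R \<Longrightarrow> einstein_ric_one R \<Longrightarrow> a1 R + a2 R + a3 R = 2"
  using einstein_Kc_sum bianchi_1234 unfolding a1_def a2_def a3_def by fastforce

lemma c_sum: "alg_curv_tensor R \<Longrightarrow> einstein_ric_one R \<Longrightarrow> c1 R + c2 R + c3 R = 2"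
  using einstein_Kc_sum bianchi_1234 unfolding c1_def c2_def c3_def by fastforce

lemma berger_sorted:
  "berger_basis R \<Longrightarrow> a1 R \<le> a2 R \<and> a2 R \<le> a3 R \<and> c1 R \<le> c2 R \<and> c2 R \<le> c3 R"
  unfolding berger_basis_def a1_def a2_def a3_def c1_def c2_def c3_def by auto

lemma berger_Kc13_ge_K_s_0:
  assumes "pinched R s" "s \<ge> 0" "berger_basis R" "Kc R 1 2 \<le> eps0"
  shows "K_s 0 \<le> Kc R 1 3"
proof -
  have "Kc R 1 2 \<le> Kc R 1 3" using assms(3) unfolding berger_basis_def by linarith
  then have "K_s 0 + s * eps0 \<le> Kc R 1 3 + s * Kc R 1 2"
    using pinched_coord[OF assms(1)] K_s_shift[of s] by (simp add: idx_eq mult.commute)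
  moreover have "s * Kc R 1 2 \<le> s * eps0" using assms(4,2) by (rule mult_left_mono)
  ultimately show ?thesis by linarith
qed

theorem lemma4p1:
  fixes R :: "nat \<Rightarrow> nat \<Rightarrow> nat \<Rightarrow> nat \<Rightarrow> real" and s \<epsilon> :: real
  assumes "s \<ge> 0"
    and "alg_curv_tensor R"
    and "einstein_ric_one R"
    and "nonneg_sec R"
    and "pinched R s"
    and "berger_basis R"
    and "\<epsilon> > 0"
    and "Kc R 1 2 \<le> eps0 - \<epsilon>"
  shows "(a2 R \<ge> 0 \<and> c2 R \<ge> 0 \<longrightarrow> Iq R > 8 / 3 * \<epsilon>)
     \<and> (a2 R < 0 \<or> c2 R < 0 \<longrightarrow> Iq R > \<epsilon>)"
proof -
  note sums = a_sum[OF assms(2,3)] c_sum[OF assms(2,3)]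
  note sorted = berger_sorted[OF assms(6)]
  have T: "a1 R + c1 R = 4 * Kc R 1 2" "0 \<le> Kc R 1 2"
    using Kc_nonneg[OF assms(4)] unfolding a1_def c1_def by (simp_all add: idx_eq)
  then have T_nonneg: "0 \<le> a1 R + c1 R" by simp
  have "a2 R + c2 R = 4 * Kc R 1 3" unfolding a2_def c2_def by simp
  with berger_Kc13_ge_K_s_0[OF assms(5,1,6)] assms(7,8)
  have mid: "4 * K_s 0 \<le> a2 R + c2 R" by simp
  have I: "Iq R = spread (c1 R) (c2 R) (c3 R) + spread (a1 R) (a2 R) (a3 R)"
    unfolding Iq_def spread_def by simp
  show ?thesis
  proof (intro conjI impI)
    assume "a2 R \<ge> 0 \<and> c2 R \<ge> 0"
    then have "spread (a1 R) (a2 R) (a3 R) \<ge> 4/3 * (a2 R - a1 R)"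
        "spread (c1 R) (c2 R) (c3 R) \<ge> 4/3 * (c2 R - c1 R)"
      using spread_ge_gap sums sorted by simp_all
    then have "Iq R \<ge> 4/3 * (a2 R + c2 R - (a1 R + c1 R))" unfolding I by simp
    then show "Iq R > 8 / 3 * \<epsilon>" using T mid eps0_lt_K_s_0 assms(7,8) by argo
  next
    assume "a2 R < 0 \<or> c2 R < 0"
    then have "I_lower (a1 R + c1 R) (4 * K_s 0) \<le> Iq R"
      using spread_add_ge_I_lower sums sorted T_nonneg mid K_s_0_bounds unfolding I by simp
    moreover have "\<epsilon> < I_lower (a1 R + c1 R) (4 * K_s 0)" using I_lower_gt T assms(7,8) by simp
    ultimately show "Iq R > \<epsilon>" by linarith
  qed
qed

end
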